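(* In the spectral sequence described in the context, if $r\geq 2$ and $r\not\equiv 4\pmod 9$ and $r\not\equiv 8\pmod 9$, then $d_r=0$. Furthermore, for every $n\geq 0$, $$d_{4+9n}(W_+^{(4+9n)})\subseteq W_-^{(4+9n)},\quad d_{4+9n}(W_-^{(4+9n)})=0,\quad d_{8+9n}(W_+^{(8+9n)})=0,\quad d_{8+9n}(W_-^{(8+9n)})\subseteq W_+^{(8+9n)}.$$
   Context: $k=\mathbb{F}_3$. The spectral sequence is the $b_{10}$-localized $K(\xi_1)$-based Adams spectral sequence converging to $b_{10}^{-1}\operatorname{Ext}_P(\mathbb{F}_3,\mathbb{F}_3)$, trigraded by $(s,t,u)$ (filtration, internal homological degree, internal topological degree) with $d_r:E_r^{s,t,u}\to E_r^{s+r,t-r+1,u}$ and $E_2\cong E[h_{10}]\otimes k[b_{10}^{\pm1}][w_2,w_3,\dots]$, where $h_{10}$ has degree $(0,1,4)$, $b_{10}$ has $(0,2,12)$, $w_n$ has $(1,1,2(3^n+1))$. On $E_2$, $W_+=k[b_{10}^{\pm1}][w_2,w_3,\dots]$ and $W_-=h_{10}W_+$; equivalently $W_+$ (resp. $W_-$) is spanned by the trihomogeneous elements with $s+t$ even (resp. odd). For each $r$, $W_+^{(r)}$ (resp. $W_-^{(r)}$) denotes the span of trihomogeneous elements of $E_r$ with $s+t$ even (resp. odd). *)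

theory Defs
  imports Complex_Main "HOL-Library.Multiset"
begin

text \<open>Tridegrees (s,t,u): filtration, internal homological degree, internal topological degree.\<close>
type_synonym tdeg = "int \<times> int \<times> int"

text \<open>Monomial basis of E_2 = E[h10] (x) k[b10^{+-1}][w_2,w_3,...]: a monomial
  h10^e b10^k w_{n_1}...w_{n_m} is encoded as (e, k, {#n_1,...,n_m#}) with e in {0,1},
  k an integer and all n_i >= 2.  Its tridegree is
  e*(0,1,4) + k*(0,2,12) + sum_i (1,1,2(3^{n_i}+1)).\<close>
definition E2_monomials :: "tdeg \<Rightarrow> (nat \<times> int \<times> nat multiset) set" where
  "E2_monomials deg = (case deg of (s, t, u) \<Rightarrow>
     {(e, k, M). e \<le> 1 \<and> (\<forall>n\<in>#M. 2 \<le> n)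
        \<and> s = int (size M)
        \<and> t = int e + 2 * k + int (size M)
        \<and> u = 4 * int e + 12 * k + (\<Sum>n\<in>#M. 2 * (3 ^ n + 1))})"

text \<open>A trigraded spectral sequence (pages r >= 2) of k-vector spaces inside an ambient
  k-vector space 'v.  E r (s,t,u) is the subspace E_r^{s,t,u}; d r is the differential
  d_r : E_r^{s,t,u} -> E_r^{s+r,t-r+1,u}; E_{r+1}^{s,t,u} is the homology of d_r at (s,t,u)
  (expressed by a linear surjection from the cycles with kernel the boundaries); and
  E_2^{s,t,u} has a basis indexed by the monomials of E[h10] (x) k[b10^{+-1}][w_2,w_3,...]
  of tridegree (s,t,u).\<close>
definition b10_KAdams_ss ::
  "('k::field \<Rightarrow> 'v::ab_group_add \<Rightarrow> 'v) \<Rightarrow> (nat \<Rightarrow> tdeg \<Rightarrow> 'v set) \<Rightarrow> (nat \<Rightarrow> 'v \<Rightarrow> 'v) \<Rightarrow> bool"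
where
  "b10_KAdams_ss scale E d \<longleftrightarrow>
     vector_space scale
   \<and> (\<forall>r\<ge>2. \<forall>deg. module.subspace scale (E r deg))
   \<and> (\<forall>r\<ge>2. Vector_Spaces.linear scale scale (d r))
   \<and> (\<forall>r\<ge>2. \<forall>s t u. d r ` E r (s, t, u) \<subseteq> E r (s + int r, t - int r + 1, u))
   \<and> (\<forall>r\<ge>2. \<forall>deg. \<forall>x\<in>E r deg. d r (d r x) = 0)
   \<and> (\<forall>r\<ge>2. \<forall>s t u.
        let Z = {x \<in> E r (s, t, u). d r x = 0} in
        \<exists>\<pi> :: 'v \<Rightarrow> 'v.
          (\<forall>x\<in>Z. \<forall>y\<in>Z. \<pi> (x + y) = \<pi> x + \<pi> y)
        \<and> (\<forall>c. \<forall>x\<in>Z. \<pi> (scale c x) = scale c (\<pi> x))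
        \<and> \<pi> ` Z = E (Suc r) (s, t, u)
        \<and> {x \<in> Z. \<pi> x = 0} = d r ` E r (s - int r, t + int r - 1, u))
   \<and> (\<forall>deg. \<exists>b :: nat \<times> int \<times> nat multiset \<Rightarrow> 'v.
        inj_on b (E2_monomials deg)
      \<and> module.independent scale (b ` E2_monomials deg)
      \<and> module.span scale (b ` E2_monomials deg) = E 2 deg)"

definition page_total :: "('k::field \<Rightarrow> 'v::ab_group_add \<Rightarrow> 'v) \<Rightarrow> (nat \<Rightarrow> tdeg \<Rightarrow> 'v set) \<Rightarrow> nat \<Rightarrow> 'v set" where
  "page_total scale E r = module.span scale (\<Union>deg. E r deg)"

definition W_plus :: "('k::field \<Rightarrow> 'v::ab_group_add \<Rightarrow> 'v) \<Rightarrow> (nat \<Rightarrow> tdeg \<Rightarrow> 'v set) \<Rightarrow> nat \<Rightarrow> 'v set" where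
  "W_plus scale E r = module.span scale (\<Union>{E r (s, t, u) | s t u. even (s + t)})"

definition W_minus :: "('k::field \<Rightarrow> 'v::ab_group_add \<Rightarrow> 'v) \<Rightarrow> (nat \<Rightarrow> tdeg \<Rightarrow> 'v set) \<Rightarrow> nat \<Rightarrow> 'v set" where
  "W_minus scale E r = module.span scale (\<Union>{E r (s, t, u) | s t u. odd (s + t)})"

end

theory Submission
  imports Defs
begin

text \<open>Every generator of \<open>E\<^sub>2\<close> satisfies two degree constraints: its exterior exponent
  \<open>e\<close> is the parity of \<open>s + t\<close>, and \<open>u \<equiv> 6t - 4s - 2e (mod 18)\<close>, because
  \<open>2(3\<^sup>n + 1) \<equiv> 2 (mod 18)\<close> for \<open>n \<ge> 2\<close>. A differential \<open>d\<^sub>r\<close> keeps \<open>u\<close>, moves \<open>(s, t)\<close>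
  by \<open>(r, 1 - r)\<close> and flips the parity of \<open>s + t\<close>; comparing the congruences at source and
  target forces \<open>5r \<equiv> 2 + 2e (mod 9)\<close>, i.e. \<open>r \<equiv> 4\<close> from even and \<open>r \<equiv> 8\<close> from odd
  total degree. All other components of \<open>d\<^sub>r\<close> have zero source or zero target, and the
  statement for the spans follows by linearity. Nothing depends on the ground field being
  \<open>\<bbbF>\<^sub>3\<close>.\<close>

lemma sum_mset_three_power_weights_cong:
  assumes "\<forall>n\<in>#M. 2 \<le> n"
  shows "18 dvd (\<Sum>n\<in>#M. 2 * (3 ^ n + 1)) - 2 * int (size M)"
  using assms
proof (induction M)
  case empty
  then show ?case by simp
next
  case (add x M)
  then obtain j where "x = j + 2"
    using le_Suc_ex by (metis add.commute union_single_eq_member)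
  then have "(\<Sum>n\<in>#add_mset x M. 2 * (3 ^ n + 1)) - 2 * int (size (add_mset x M))
      = 18 * 3 ^ j + ((\<Sum>n\<in>#M. 2 * (3 ^ n + 1)) - 2 * int (size M))"
    by (simp add: power_add algebra_simps)
  moreover have "18 dvd (\<Sum>n\<in>#M. 2 * (3 ^ n + 1)) - 2 * int (size M)"
    using add by simp
  ultimately show ?case
    by simp
qed

definition admissible_tdeg :: "tdeg \<Rightarrow> bool" where
  "admissible_tdeg deg \<longleftrightarrow> (case deg of (s, t, u) \<Rightarrow> 18 dvd u + 4 * s + 2 * ((s + t) mod 2) - 6 * t)"

lemma E2_monomials_admissible:
  assumes "(e, k, M) \<in> E2_monomials (s, t, u)"
  shows "admissible_tdeg (s, t, u)"
proof -
  from assms have e: "e \<le> 1" and M: "\<forall>n\<in>#M. 2 \<le> n" and s: "s = int (size M)"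
    and t: "t = int e + 2 * k + s"
    and u: "u = 4 * int e + 12 * k + (\<Sum>n\<in>#M. 2 * (3 ^ n + 1))"
    by (auto simp: E2_monomials_def)
  have "s + t = 2 * (s + k) + int e"
    using t by simp
  then have "(s + t) mod 2 = int e"
    using e by simp
  then have "u + 4 * s + 2 * ((s + t) mod 2) - 6 * t
      = (\<Sum>n\<in>#M. 2 * (3 ^ n + 1)) - 2 * int (size M)"
    using s t u by simp
  then show ?thesis
    using sum_mset_three_power_weights_cong[OF M] by (simp add: admissible_tdeg_def)
qed

lemma admissible_tdeg_shift:
  assumes "admissible_tdeg (s, t, u)" and "admissible_tdeg (s + int r, t - int r + 1, u)"
  shows "r mod 9 = 4 \<and> even (s + t) \<or> r mod 9 = 8 \<and> odd (s + t)"
proof -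
  have src: "18 dvd u + 4 * s + 2 * ((s + t) mod 2) - 6 * t"
    using assms(1) by (simp add: admissible_tdeg_def)
  have "s + int r + (t - int r + 1) = s + t + 1"
    by simp
  then have tgt: "18 dvd u + 4 * (s + int r) + 2 * ((s + t + 1) mod 2) - 6 * (t - int r + 1)"
    using assms(2) by (simp only: admissible_tdeg_def prod.case)
  have "18 dvd (u + 4 * (s + int r) + 2 * ((s + t + 1) mod 2) - 6 * (t - int r + 1))
      - (u + 4 * s + 2 * ((s + t) mod 2) - 6 * t)"
    using src tgt by (rule dvd_diff[rotated])
  then have diff: "18 dvd 10 * int r - 6 + 2 * ((s + t + 1) mod 2) - 2 * ((s + t) mod 2)"
    by (simp add: algebra_simps)
  show ?thesis
  proof (cases "even (s + t)")
    case True
    then have "(s + t) mod 2 = 0" "(s + t + 1) mod 2 = 1"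
      by presburger+
    then have "18 dvd 10 * int r - 4"
      using diff by simp
    then have "r mod 9 = 4"
      by presburger
    then show ?thesis
      using True by blast
  next
    case False
    then have "(s + t) mod 2 = 1" "(s + t + 1) mod 2 = 0"
      by presburger+
    then have "18 dvd 10 * int r - 8"
      using diff by simp
    then have "r mod 9 = 8"
      by presburger
    then show ?thesis
      using False by blast
  qed
qed

context
  fixes scale :: "'k::field \<Rightarrow> 'v::ab_group_add \<Rightarrow> 'v"
    and E :: "nat \<Rightarrow> tdeg \<Rightarrow> 'v set"
    and d :: "nat \<Rightarrow> 'v \<Rightarrow> 'v"
  assumes ss: "b10_KAdams_ss scale E d"
begin

lemma b10_KAdams_ss_module: "module scale"
  using ss by (simp add: b10_KAdams_ss_def module_iff_vector_space)

lemma b10_KAdams_ss_module_hom: "2 \<le> r \<Longrightarrow> module_hom scale scale (d r)"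
  using ss by (simp add: b10_KAdams_ss_def linear_iff_module_hom)

lemma b10_KAdams_ss_d_mem:
  "2 \<le> r \<Longrightarrow> x \<in> E r (s, t, u) \<Longrightarrow> d r x \<in> E r (s + int r, t - int r + 1, u)"
  using ss unfolding b10_KAdams_ss_def by blast

lemma b10_KAdams_ss_next_page:
  assumes "2 \<le> r"
  obtains \<pi> where "\<forall>x\<in>{x \<in> E r deg. d r x = 0}. \<forall>y\<in>{x \<in> E r deg. d r x = 0}. \<pi> (x + y) = \<pi> x + \<pi> y"
    and "\<pi> ` {x \<in> E r deg. d r x = 0} = E (Suc r) deg"
proof -
  obtain s t u where deg: "deg = (s, t, u)"
    by (cases deg) auto
  have "\<forall>r\<ge>2. \<forall>s t u. let Z = {x \<in> E r (s, t, u). d r x = 0} in \<exists>\<pi> :: 'v \<Rightarrow> 'v.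
          (\<forall>x\<in>Z. \<forall>y\<in>Z. \<pi> (x + y) = \<pi> x + \<pi> y)
        \<and> (\<forall>c. \<forall>x\<in>Z. \<pi> (scale c x) = scale c (\<pi> x))
        \<and> \<pi> ` Z = E (Suc r) (s, t, u)
        \<and> {x \<in> Z. \<pi> x = 0} = d r ` E r (s - int r, t + int r - 1, u)"
    using ss unfolding b10_KAdams_ss_def by (elim conjE) assumption
  from this[rule_format, OF assms, of s t u] show ?thesis
    using that unfolding deg Let_def by (elim exE conjE)
qed

lemma b10_KAdams_ss_E2_basis:
  obtains b where "module.span scale (b ` E2_monomials deg) = E 2 deg"
proof -
  have "\<forall>deg. \<exists>b :: nat \<times> int \<times> nat multiset \<Rightarrow> 'v.
        inj_on b (E2_monomials deg)
      \<and> module.independent scale (b ` E2_monomials deg)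
      \<and> module.span scale (b ` E2_monomials deg) = E 2 deg"
    using ss unfolding b10_KAdams_ss_def by (elim conjE) assumption
  then show ?thesis
    using that by blast
qed

lemma b10_KAdams_ss_page_zero:
  assumes "E2_monomials deg = {}" and "2 \<le> r"
  shows "E r deg = {0}"
  using \<open>2 \<le> r\<close>
proof (induction r rule: dec_induct)
  case base
  obtain b where "module.span scale (b ` E2_monomials deg) = E 2 deg"
    by (rule b10_KAdams_ss_E2_basis)
  then show ?case
    using assms(1) module.span_empty[OF b10_KAdams_ss_module] by simp
next
  case (step r)
  have cycles: "{x \<in> E r deg. d r x = 0} = {0}"
    using step(3) module_hom.zero[OF b10_KAdams_ss_module_hom[OF step(1)]] by auto
  obtain \<pi> where "\<forall>x\<in>{x \<in> E r deg. d r x = 0}. \<forall>y\<in>{x \<in> E r deg. d r x = 0}.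
      \<pi> (x + y) = \<pi> x + \<pi> y"
    and onto: "\<pi> ` {x \<in> E r deg. d r x = 0} = E (Suc r) deg"
    by (rule b10_KAdams_ss_next_page[OF step(1)])
  then have "\<pi> 0 = \<pi> 0 + \<pi> 0"
    unfolding cycles by simp
  then show ?case
    using onto unfolding cycles by simp
qed

lemma b10_KAdams_ss_d_eq_0:
  assumes "2 \<le> r" and x: "x \<in> E r (s, t, u)"
    and "\<not> (r mod 9 = 4 \<and> even (s + t) \<or> r mod 9 = 8 \<and> odd (s + t))"
  shows "d r x = 0"
proof (cases "E2_monomials (s, t, u) = {} \<or> E2_monomials (s + int r, t - int r + 1, u) = {}")
  case True
  have "d r 0 = 0"
    using module_hom.zero[OF b10_KAdams_ss_module_hom[OF \<open>2 \<le> r\<close>]] .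
  then show ?thesis
    using True x b10_KAdams_ss_d_mem[OF \<open>2 \<le> r\<close> x] b10_KAdams_ss_page_zero[OF _ \<open>2 \<le> r\<close>]
    by auto
next
  case False
  then obtain m m' where "m \<in> E2_monomials (s, t, u)"
    and "m' \<in> E2_monomials (s + int r, t - int r + 1, u)"
    by blast
  then have "admissible_tdeg (s, t, u)" and "admissible_tdeg (s + int r, t - int r + 1, u)"
    by (metis E2_monomials_admissible prod.collapse)+
  then show ?thesis
    using admissible_tdeg_shift assms(3) by blast
qed

lemma b10_KAdams_ss_d_eq_0_on_parity_span:
  assumes "2 \<le> r"
    and "\<And>a. P a \<Longrightarrow> \<not> (r mod 9 = 4 \<and> even a \<or> r mod 9 = 8 \<and> odd a)"
    and "x \<in> module.span scale (\<Union>{E r (s, t, u) | s t u. P (s + t)})"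
  shows "d r x = 0"
proof (rule module_hom.eq_0_on_span[OF b10_KAdams_ss_module_hom[OF \<open>2 \<le> r\<close>] _ assms(3)])
  fix y
  assume "y \<in> \<Union>{E r (s, t, u) | s t u. P (s + t)}"
  then obtain s t u where "y \<in> E r (s, t, u)" and "P (s + t)"
    by blast
  then show "d r y = 0"
    using b10_KAdams_ss_d_eq_0[OF \<open>2 \<le> r\<close>] assms(2) by blast
qed

lemma b10_KAdams_ss_d_parity_span:
  assumes "2 \<le> r" and "\<And>a. P a \<Longrightarrow> Q (a + 1)"
  shows "d r ` module.span scale (\<Union>{E r (s, t, u) | s t u. P (s + t)})
    \<subseteq> module.span scale (\<Union>{E r (s, t, u) | s t u. Q (s + t)})"
proof -
  have pieces: "d r ` \<Union>{E r (s, t, u) | s t u. P (s + t)} \<subseteq> \<Union>{E r (s, t, u) | s t u. Q (s + t)}"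
  proof
    fix y
    assume "y \<in> d r ` \<Union>{E r (s, t, u) | s t u. P (s + t)}"
    then obtain s t u x where x: "x \<in> E r (s, t, u)" and "P (s + t)" and y: "y = d r x"
      by blast
    have "y \<in> E r (s + int r, t - int r + 1, u)"
      using b10_KAdams_ss_d_mem[OF \<open>2 \<le> r\<close> x] y by simp
    moreover have "Q ((s + int r) + (t - int r + 1))"
      using assms(2)[OF \<open>P (s + t)\<close>] by (simp add: add.assoc)
    ultimately show "y \<in> \<Union>{E r (s, t, u) | s t u. Q (s + t)}"
      by blast
  qed
  have "d r ` module.span scale (\<Union>{E r (s, t, u) | s t u. P (s + t)})
      = module.span scale (d r ` \<Union>{E r (s, t, u) | s t u. P (s + t)})"
    using module_hom.span_image[OF b10_KAdams_ss_module_hom[OF \<open>2 \<le> r\<close>]] by simp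
  also have "\<dots> \<subseteq> module.span scale (\<Union>{E r (s, t, u) | s t u. Q (s + t)})"
    using module.span_mono[OF b10_KAdams_ss_module pieces] .
  finally show ?thesis .
qed

end

theorem proposition2p3:
  fixes scale :: "'k::{field, finite} \<Rightarrow> 'v::ab_group_add \<Rightarrow> 'v"
    and E :: "nat \<Rightarrow> int \<times> int \<times> int \<Rightarrow> 'v set"
    and d :: "nat \<Rightarrow> 'v \<Rightarrow> 'v"
  assumes "card (UNIV :: 'k set) = 3"
    and "b10_KAdams_ss scale E d"
  shows "(\<forall>r\<ge>2. r mod 9 \<noteq> 4 \<and> r mod 9 \<noteq> 8 \<longrightarrow> (\<forall>x\<in>page_total scale E r. d r x = 0))
    \<and> (\<forall>n::nat.
          d (4 + 9 * n) ` W_plus scale E (4 + 9 * n) \<subseteq> W_minus scale E (4 + 9 * n)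
        \<and> (\<forall>x\<in>W_minus scale E (4 + 9 * n). d (4 + 9 * n) x = 0)
        \<and> (\<forall>x\<in>W_plus scale E (8 + 9 * n). d (8 + 9 * n) x = 0)
        \<and> d (8 + 9 * n) ` W_minus scale E (8 + 9 * n) \<subseteq> W_plus scale E (8 + 9 * n))"
proof -
  note zero_on_span = b10_KAdams_ss_d_eq_0_on_parity_span[OF assms(2)]
  note parity_span = b10_KAdams_ss_d_parity_span[OF assms(2)]
  have [simp]: "(4 + 9 * n) mod 9 = 4" "(8 + 9 * n) mod 9 = 8" for n :: nat
    by presburger+
  have "page_total scale E r = module.span scale (\<Union>{E r (s, t, u) | s t u. True})" for r
    unfolding page_total_def by (rule arg_cong[where f = "module.span scale"]) auto
  then have page: "\<forall>r\<ge>2. r mod 9 \<noteq> 4 \<and> r mod 9 \<noteq> 8 \<longrightarrow> (\<forall>x\<in>page_total scale E r. d r x = 0)"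
    by (auto intro: zero_on_span[where P = "\<lambda>_. True"])
  show ?thesis
    using page unfolding W_plus_def W_minus_def
    by (intro conjI allI ballI parity_span zero_on_span) auto
qed

end
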